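(* Let $\rho>0$, $\xi>0$, and $H_0=\frac{1}{2(1+\rho r^2)}\big(P_r^2+\frac{P_\phi^2}{r^2}+\xi r^2\big)$ on $(r,\phi)\in(0,\infty)\times\mathbb{S}^1$, with quadratic integrals $S_1=\cos(2\phi)P_r\frac{P_\phi}{r}+\sin(2\phi)\big(H_0-\frac{P_\phi^2}{r^2}\big)$, $S_2=-\sin(2\phi)P_r\frac{P_\phi}{r}+\cos(2\phi)\big(H_0-\frac{P_\phi^2}{r^2}\big)$. Consider the closed trajectories on level sets $H_0=E$, $P_\phi=L>0$ with $E_+<E<\xi/(2\rho)$, where $E_+=L^2(-\rho+\sqrt{\rho^2+\xi/L^2})$, with $\phi$ normalized so that $\phi=0$ where $r$ is minimal. Then the action coordinates $I_\phi=\frac1{2\pi}\oint P_\phi\,d\phi$, $I_r=\frac1{2\pi}\oint P_r\,dr$ are $$I_\phi=L,\qquad J\equiv I_r+I_\phi=\frac{E}{\sqrt{\xi-2\rho E}},$$ the Hamiltonian is $H(J)=J\big(\sqrt{\xi+\rho^2J^2}-\rho J\big)$, and the quadratic integrals take the values $$S_1=0,\qquad S_2=-\sqrt{J^2-I_\phi^2}\,\big(\sqrt{\xi+\rho^2J^2}-\rho J\big).$$ *)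

theory Defs
  imports "HOL-Analysis.Analysis"
begin

text \<open>Hamiltonian on phase space with coordinates (r, phi, P_r, P_phi);
  phi is a real lift of the angle on the circle. H0 does not depend on phi.\<close>
definition H0 :: "real \<Rightarrow> real \<Rightarrow> real \<Rightarrow> real \<Rightarrow> real \<Rightarrow> real \<Rightarrow> real" where
  "H0 \<rho> \<xi> r \<phi> pr p\<phi> = (pr\<^sup>2 + p\<phi>\<^sup>2 / r\<^sup>2 + \<xi> * r\<^sup>2) / (2 * (1 + \<rho> * r\<^sup>2))"

definition S1 :: "real \<Rightarrow> real \<Rightarrow> real \<Rightarrow> real \<Rightarrow> real \<Rightarrow> real \<Rightarrow> real" where
  "S1 \<rho> \<xi> r \<phi> pr p\<phi> =
     cos (2 * \<phi>) * pr * (p\<phi> / r) + sin (2 * \<phi>) * (H0 \<rho> \<xi> r \<phi> pr p\<phi> - p\<phi>\<^sup>2 / r\<^sup>2)"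

definition S2 :: "real \<Rightarrow> real \<Rightarrow> real \<Rightarrow> real \<Rightarrow> real \<Rightarrow> real \<Rightarrow> real" where
  "S2 \<rho> \<xi> r \<phi> pr p\<phi> =
     - sin (2 * \<phi>) * pr * (p\<phi> / r) + cos (2 * \<phi>) * (H0 \<rho> \<xi> r \<phi> pr p\<phi> - p\<phi>\<^sup>2 / r\<^sup>2)"

definition hamilton_solution ::
  "real \<Rightarrow> real \<Rightarrow> (real \<Rightarrow> real) \<Rightarrow> (real \<Rightarrow> real) \<Rightarrow> (real \<Rightarrow> real) \<Rightarrow> (real \<Rightarrow> real) \<Rightarrow> bool" where
  "hamilton_solution \<rho> \<xi> r \<phi> pr p\<phi> \<longleftrightarrow>
     (\<forall>t. r t > 0 \<and>
       (r has_real_derivative deriv (\<lambda>y. H0 \<rho> \<xi> (r t) (\<phi> t) y (p\<phi> t)) (pr t)) (at t) \<and>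
       (\<phi> has_real_derivative deriv (\<lambda>y. H0 \<rho> \<xi> (r t) (\<phi> t) (pr t) y) (p\<phi> t)) (at t) \<and>
       (pr has_real_derivative - deriv (\<lambda>y. H0 \<rho> \<xi> y (\<phi> t) (pr t) (p\<phi> t)) (r t)) (at t) \<and>
       (p\<phi> has_real_derivative - deriv (\<lambda>y. H0 \<rho> \<xi> (r t) y (pr t) (p\<phi> t)) (\<phi> t)) (at t))"

definition is_period ::
  "(real \<Rightarrow> real) \<Rightarrow> (real \<Rightarrow> real) \<Rightarrow> (real \<Rightarrow> real) \<Rightarrow> (real \<Rightarrow> real) \<Rightarrow> real \<Rightarrow> bool" where
  "is_period r \<phi> pr p\<phi> T \<longleftrightarrow>
     (\<forall>t. r (t + T) = r t \<and> pr (t + T) = pr t \<and> p\<phi> (t + T) = p\<phi> t \<and>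
          (\<exists>k::int. \<phi> (t + T) = \<phi> t + 2 * pi * of_int k))"

definition minimal_period ::
  "(real \<Rightarrow> real) \<Rightarrow> (real \<Rightarrow> real) \<Rightarrow> (real \<Rightarrow> real) \<Rightarrow> (real \<Rightarrow> real) \<Rightarrow> real \<Rightarrow> bool" where
  "minimal_period r \<phi> pr p\<phi> T \<longleftrightarrow>
     T > 0 \<and> is_period r \<phi> pr p\<phi> T \<and> (\<forall>T'. 0 < T' \<and> T' < T \<longrightarrow> \<not> is_period r \<phi> pr p\<phi> T')"

definition action :: "(real \<Rightarrow> real) \<Rightarrow> (real \<Rightarrow> real) \<Rightarrow> real \<Rightarrow> real" where
  "action p q T = integral {0..T} (\<lambda>t. p t * deriv q t) / (2 * pi)"

end

theory Submission
  imports Defs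
begin

text \<open>With \<open>\<Omega> = sqrt (\<xi> - 2 \<rho> E)\<close> and \<open>D = 1 + \<rho> r\<^sup>2\<close>, Hamilton's equations on the level set
  turn into a harmonic oscillator in disguise: for \<open>X = r cos \<phi>\<close>, \<open>Y = r sin \<phi>\<close> and the
  corresponding velocities \<open>V\<close>, \<open>W\<close> one has \<open>X' = V / D\<close>, \<open>V' = - \<Omega>\<^sup>2 X / D\<close> and likewise for
  \<open>Y\<close>, \<open>W\<close>. In the clock \<open>\<Theta>\<close> with \<open>\<Theta>' = \<Omega> / D\<close> the orbit is therefore the ellipse
  \<open>X = a cos \<Theta>\<close>, \<open>Y = b sin \<Theta>\<close>, where \<open>a\<close> is the minimal radius and \<open>b = L / (a \<Omega>)\<close>. Elapsed time is an
  explicit increasing function of \<open>\<Theta>\<close>, so the orbit closes exactly when \<open>\<Theta>\<close> has advanced by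
  \<open>2 pi\<close>, and then \<open>\<phi>\<close> has advanced by \<open>2 pi\<close> as well. The actions are computed from explicit
  antiderivatives, and on the ellipse \<open>S1 = 0\<close> and \<open>S2 = \<Omega>\<^sup>2 (a\<^sup>2 - b\<^sup>2) / 2\<close>.\<close>

lemma H0_has_derivative_pr:
  assumes "\<rho> \<ge> 0"
  shows "((\<lambda>y. H0 \<rho> \<xi> r \<phi> y p\<phi>) has_real_derivative pr / (1 + \<rho> * r\<^sup>2)) (at pr)"
proof -
  define d where "d = 1 + \<rho> * r\<^sup>2"
  have "d > 0" using assms by (simp add: d_def add_pos_nonneg)
  have "(\<lambda>y. H0 \<rho> \<xi> r \<phi> y p\<phi>) = (\<lambda>y. (y\<^sup>2 + (p\<phi>\<^sup>2 / r\<^sup>2 + \<xi> * r\<^sup>2)) / (2 * d))"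
    unfolding H0_def d_def by (simp add: add.assoc)
  moreover have "((\<lambda>y. (y\<^sup>2 + (p\<phi>\<^sup>2 / r\<^sup>2 + \<xi> * r\<^sup>2)) / (2 * d)) has_real_derivative pr / d) (at pr)"
    using \<open>d > 0\<close> by (auto intro!: derivative_eq_intros)
  ultimately show ?thesis by (simp add: d_def)
qed

lemma H0_has_derivative_p\<phi>:
  assumes "\<rho> \<ge> 0" and "r \<noteq> 0"
  shows "((\<lambda>y. H0 \<rho> \<xi> r \<phi> pr y) has_real_derivative p\<phi> / (r\<^sup>2 * (1 + \<rho> * r\<^sup>2))) (at p\<phi>)"
proof -
  define d where "d = 1 + \<rho> * r\<^sup>2"
  have "d > 0" using assms by (simp add: d_def add_pos_nonneg)
  have "(\<lambda>y. H0 \<rho> \<xi> r \<phi> pr y) = (\<lambda>y. (y\<^sup>2 / r\<^sup>2 + (pr\<^sup>2 + \<xi> * r\<^sup>2)) / (2 * d))"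
    unfolding H0_def d_def by (simp add: algebra_simps)
  moreover have "((\<lambda>y. (y\<^sup>2 / r\<^sup>2 + (pr\<^sup>2 + \<xi> * r\<^sup>2)) / (2 * d)) has_real_derivative p\<phi> / (r\<^sup>2 * d)) (at p\<phi>)"
    using \<open>d > 0\<close> assms(2) by (auto intro!: derivative_eq_intros simp: field_simps)
  ultimately show ?thesis by (simp add: d_def)
qed

lemma H0_has_derivative_r:
  assumes "\<rho> \<ge> 0" and "r \<noteq> 0" and "H0 \<rho> \<xi> r \<phi> pr p\<phi> = E"
  shows "((\<lambda>y. H0 \<rho> \<xi> y \<phi> pr p\<phi>) has_real_derivative
           ((\<xi> - 2 * \<rho> * E) * r - p\<phi>\<^sup>2 / r ^ 3) / (1 + \<rho> * r\<^sup>2)) (at r)"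
proof -
  define d where "d = 1 + \<rho> * r\<^sup>2"
  have "d > 0" using assms by (simp add: d_def add_pos_nonneg)
  have N: "pr\<^sup>2 + p\<phi>\<^sup>2 / r\<^sup>2 + \<xi> * r\<^sup>2 = 2 * E * d"
    using assms(3) \<open>d > 0\<close> unfolding H0_def d_def by (simp add: field_simps)
  have num: "((\<lambda>y. pr\<^sup>2 + p\<phi>\<^sup>2 / y\<^sup>2 + \<xi> * y\<^sup>2) has_real_derivative - 2 * p\<phi>\<^sup>2 / r ^ 3 + 2 * \<xi> * r) (at r)"
    using assms(2) by (auto intro!: derivative_eq_intros simp: field_simps power2_eq_square power3_eq_cube)
  have den: "((\<lambda>y. 2 * (1 + \<rho> * y\<^sup>2)) has_real_derivative 4 * \<rho> * r) (at r)"
    by (auto intro!: derivative_eq_intros)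
  have "((\<lambda>y. H0 \<rho> \<xi> y \<phi> pr p\<phi>) has_real_derivative
      ((- 2 * p\<phi>\<^sup>2 / r ^ 3 + 2 * \<xi> * r) * (2 * d) - (2 * E * d) * (4 * \<rho> * r)) / ((2 * d) * (2 * d))) (at r)"
    using DERIV_divide[OF num den] \<open>d > 0\<close> N unfolding H0_def d_def by simp
  moreover have "((- 2 * p\<phi>\<^sup>2 / r ^ 3 + 2 * \<xi> * r) * (2 * d) - (2 * E * d) * (4 * \<rho> * r)) / ((2 * d) * (2 * d))
      = ((\<xi> - 2 * \<rho> * E) * r - p\<phi>\<^sup>2 / r ^ 3) / d"
    using \<open>d > 0\<close> by (simp add: field_simps)
  ultimately show ?thesis by (simp add: d_def)
qed

lemma action_eq_antiderivative_diff:
  assumes "0 \<le> T"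
    and q_deriv: "\<And>t. (q has_real_derivative q' t) (at t)"
    and F_deriv: "\<And>t. (F has_real_derivative p t * q' t) (at t)"
  shows "action p q T = (F T - F 0) / (2 * pi)"
proof -
  have "((\<lambda>t. p t * deriv q t) has_integral (F T - F 0)) {0..T}"
  proof (rule fundamental_theorem_of_calculus[OF \<open>0 \<le> T\<close>])
    fix t
    show "(F has_vector_derivative p t * deriv q t) (at t within {0..T})"
      using F_deriv[of t] DERIV_imp_deriv[OF q_deriv]
      by (simp add: has_real_derivative_iff_has_vector_derivative[symmetric] has_field_derivative_at_within)
  qed
  then show ?thesis unfolding action_def by (simp add: integral_unique)
qed

lemma sqrt_eq_frequency:
  fixes \<Omega> \<rho> \<xi> J :: real
  assumes "\<Omega> > 0" and "\<rho> \<ge> 0" and "J \<ge> 0" and "\<Omega>\<^sup>2 = \<xi> - 2 * \<rho> * (J * \<Omega>)"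
  shows "sqrt (\<xi> + \<rho>\<^sup>2 * J\<^sup>2) - \<rho> * J = \<Omega>"
proof -
  have "(\<Omega> + \<rho> * J)\<^sup>2 = \<xi> + \<rho>\<^sup>2 * J\<^sup>2"
    using assms(4) by (simp add: power2_eq_square algebra_simps)
  then have "sqrt (\<xi> + \<rho>\<^sup>2 * J\<^sup>2) = \<Omega> + \<rho> * J"
    using assms(1-3) by (intro real_sqrt_unique) auto
  then show ?thesis by simp
qed

lemma reparametrized_oscillator:
  fixes x v \<theta> d :: "real \<Rightarrow> real" and \<omega> :: real
  assumes "\<omega> > 0"
    and x_deriv: "\<And>t. (x has_real_derivative v t / d t) (at t)"
    and v_deriv: "\<And>t. (v has_real_derivative - \<omega>\<^sup>2 * x t / d t) (at t)"
    and \<theta>_deriv: "\<And>t. (\<theta> has_real_derivative \<omega> / d t) (at t)"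
    and "\<theta> t0 = 0"
  shows "x t = x t0 * cos (\<theta> t) + v t0 / \<omega> * sin (\<theta> t)"
    and "v t = v t0 * cos (\<theta> t) - \<omega> * x t0 * sin (\<theta> t)"
proof -
  define e1 where "e1 t = x t - x t0 * cos (\<theta> t) - v t0 / \<omega> * sin (\<theta> t)" for t
  define e2 where "e2 t = v t - v t0 * cos (\<theta> t) + \<omega> * x t0 * sin (\<theta> t)" for t
  have e1_deriv: "(e1 has_real_derivative e2 t / d t) (at t)" for t
  proof -
    have "(e1 has_real_derivative v t / d t + x t0 * sin (\<theta> t) * (\<omega> / d t)
        - v t0 / \<omega> * (cos (\<theta> t) * (\<omega> / d t))) (at t)"
      unfolding e1_def[abs_def] by (auto intro!: derivative_eq_intros x_deriv \<theta>_deriv simp: mult_ac)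
    moreover have "v t / d t + x t0 * sin (\<theta> t) * (\<omega> / d t) - v t0 / \<omega> * (cos (\<theta> t) * (\<omega> / d t))
        = e2 t / d t"
      using \<open>\<omega> > 0\<close> by (simp add: e2_def field_split_simps)
    ultimately show ?thesis by simp
  qed
  have e2_deriv: "(e2 has_real_derivative - \<omega>\<^sup>2 * e1 t / d t) (at t)" for t
  proof -
    have "(e2 has_real_derivative - \<omega>\<^sup>2 * x t / d t + v t0 * sin (\<theta> t) * (\<omega> / d t)
        + \<omega> * x t0 * (cos (\<theta> t) * (\<omega> / d t))) (at t)"
      unfolding e2_def[abs_def] by (auto intro!: derivative_eq_intros v_deriv \<theta>_deriv simp: mult_ac)
    moreover have "- \<omega>\<^sup>2 * x t / d t + v t0 * sin (\<theta> t) * (\<omega> / d t)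
        + \<omega> * x t0 * (cos (\<theta> t) * (\<omega> / d t)) = - \<omega>\<^sup>2 * e1 t / d t"
      using \<open>\<omega> > 0\<close> by (simp add: e1_def field_split_simps power2_eq_square)
    ultimately show ?thesis by simp
  qed
  \<comment> \<open>The oscillator energy of the deviation is conserved and vanishes at t0.\<close>
  define Q where "Q t = \<omega>\<^sup>2 * (e1 t)\<^sup>2 + (e2 t)\<^sup>2" for t
  have "(Q has_real_derivative 0) (at t)" for t
  proof -
    have "(Q has_real_derivative \<omega>\<^sup>2 * (2 * e1 t * (e2 t / d t)) + 2 * e2 t * (- \<omega>\<^sup>2 * e1 t / d t)) (at t)"
      unfolding Q_def[abs_def] by (auto intro!: derivative_eq_intros e1_deriv e2_deriv)
    then show ?thesis by (simp add: algebra_simps)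
  qed
  then have "Q t = Q t0" by (meson DERIV_isconst_all)
  also have "Q t0 = 0" by (simp add: Q_def e1_def e2_def \<open>\<theta> t0 = 0\<close>)
  finally have "e1 t = 0 \<and> e2 t = 0"
    using \<open>\<omega> > 0\<close> by (simp add: Q_def add_nonneg_eq_0_iff)
  then show "x t = x t0 * cos (\<theta> t) + v t0 / \<omega> * sin (\<theta> t)"
    and "v t = v t0 * cos (\<theta> t) - \<omega> * x t0 * sin (\<theta> t)"
    by (simp_all add: e1_def e2_def)
qed

locale level_set_orbit =
  fixes \<rho> \<xi> E L :: real and r \<phi> pr p\<phi> :: "real \<Rightarrow> real"
  assumes \<rho>_pos: "\<rho> > 0" and L_pos: "L > 0" and below_threshold: "2 * \<rho> * E < \<xi>"
    and solution: "hamilton_solution \<rho> \<xi> r \<phi> pr p\<phi>"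
    and energy: "\<And>t. H0 \<rho> \<xi> (r t) (\<phi> t) (pr t) (p\<phi> t) = E"
    and angular_momentum: "\<And>t. p\<phi> t = L"
begin

definition \<Omega> :: real where "\<Omega> = sqrt (\<xi> - 2 * \<rho> * E)"

definition D :: "real \<Rightarrow> real" where "D t = 1 + \<rho> * (r t)\<^sup>2"

lemma \<Omega>_pos: "\<Omega> > 0"
  using below_threshold by (simp add: \<Omega>_def)

lemma \<Omega>_square: "\<Omega>\<^sup>2 = \<xi> - 2 * \<rho> * E"
  using below_threshold by (simp add: \<Omega>_def)

lemma r_pos: "r t > 0"
  using solution by (simp add: hamilton_solution_def)

lemma D_pos: "D t > 0"
  using \<rho>_pos by (simp add: D_def add_pos_nonneg)

lemma energy_identity: "(pr t)\<^sup>2 + L\<^sup>2 / (r t)\<^sup>2 + \<Omega>\<^sup>2 * (r t)\<^sup>2 = 2 * E"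
proof -
  have "((pr t)\<^sup>2 + L\<^sup>2 / (r t)\<^sup>2 + \<xi> * (r t)\<^sup>2) / (2 * D t) = E"
    using energy[of t] by (simp add: H0_def D_def angular_momentum)
  then have "(pr t)\<^sup>2 + L\<^sup>2 / (r t)\<^sup>2 + \<xi> * (r t)\<^sup>2 = 2 * E * D t"
    using D_pos[of t] by (simp add: field_simps)
  then show ?thesis by (simp add: D_def \<Omega>_square algebra_simps)
qed

lemma E_pos: "E > 0"
proof -
  have "L\<^sup>2 / (r 0)\<^sup>2 > 0" using L_pos r_pos[of 0] by simp
  then show ?thesis using energy_identity[of 0] by (smt (verit) zero_le_power2 mult_nonneg_nonneg)
qed

lemma r_deriv: "(r has_real_derivative pr t / D t) (at t)"
proof -
  have "deriv (\<lambda>y. H0 \<rho> \<xi> (r t) (\<phi> t) y (p\<phi> t)) (pr t) = pr t / D t"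
    unfolding D_def using \<rho>_pos by (intro DERIV_imp_deriv H0_has_derivative_pr) simp
  then show ?thesis using solution by (metis hamilton_solution_def)
qed

lemma \<phi>_deriv: "(\<phi> has_real_derivative L / ((r t)\<^sup>2 * D t)) (at t)"
proof -
  have "deriv (\<lambda>y. H0 \<rho> \<xi> (r t) (\<phi> t) (pr t) y) (p\<phi> t) = L / ((r t)\<^sup>2 * D t)"
    unfolding D_def angular_momentum using \<rho>_pos r_pos[of t]
    by (intro DERIV_imp_deriv H0_has_derivative_p\<phi>) auto
  then show ?thesis using solution by (metis hamilton_solution_def)
qed

lemma pr_deriv: "(pr has_real_derivative (L\<^sup>2 / (r t) ^ 3 - \<Omega>\<^sup>2 * r t) / D t) (at t)"
proof -
  have "deriv (\<lambda>y. H0 \<rho> \<xi> y (\<phi> t) (pr t) (p\<phi> t)) (r t) = (\<Omega>\<^sup>2 * r t - L\<^sup>2 / (r t) ^ 3) / D t"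
    unfolding D_def \<Omega>_square angular_momentum using \<rho>_pos r_pos[of t] energy[of t]
    by (intro DERIV_imp_deriv H0_has_derivative_r) (auto simp: angular_momentum)
  then have "- deriv (\<lambda>y. H0 \<rho> \<xi> y (\<phi> t) (pr t) (p\<phi> t)) (r t) = (L\<^sup>2 / (r t) ^ 3 - \<Omega>\<^sup>2 * r t) / D t"
    by (simp add: minus_divide_left)
  then show ?thesis using solution by (metis hamilton_solution_def)
qed

lemma \<phi>_strict_mono: "x < y \<Longrightarrow> \<phi> x < \<phi> y"
  using DERIV_pos_imp_increasing \<phi>_deriv D_pos r_pos L_pos
  by (meson divide_pos_pos mult_pos_pos zero_less_power)

definition X :: "real \<Rightarrow> real" where "X t = r t * cos (\<phi> t)"
definition Y :: "real \<Rightarrow> real" where "Y t = r t * sin (\<phi> t)"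
definition V :: "real \<Rightarrow> real" where "V t = pr t * cos (\<phi> t) - L / r t * sin (\<phi> t)"
definition W :: "real \<Rightarrow> real" where "W t = pr t * sin (\<phi> t) + L / r t * cos (\<phi> t)"

lemma X_deriv: "(X has_real_derivative V t / D t) (at t)"
  unfolding X_def[abs_def] V_def using r_pos[of t] D_pos[of t]
  by (auto intro!: derivative_eq_intros r_deriv \<phi>_deriv simp: field_simps power2_eq_square)

lemma Y_deriv: "(Y has_real_derivative W t / D t) (at t)"
  unfolding Y_def[abs_def] W_def using r_pos[of t] D_pos[of t]
  by (auto intro!: derivative_eq_intros r_deriv \<phi>_deriv simp: field_simps power2_eq_square)

lemma V_deriv: "(V has_real_derivative - \<Omega>\<^sup>2 * X t / D t) (at t)"
  unfolding V_def[abs_def] X_def using r_pos[of t] D_pos[of t]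
  by (auto intro!: derivative_eq_intros r_deriv \<phi>_deriv pr_deriv
      simp: field_simps power2_eq_square power3_eq_cube)

lemma W_deriv: "(W has_real_derivative - \<Omega>\<^sup>2 * Y t / D t) (at t)"
  unfolding W_def[abs_def] Y_def using r_pos[of t] D_pos[of t]
  by (auto intro!: derivative_eq_intros r_deriv \<phi>_deriv pr_deriv
      simp: field_simps power2_eq_square power3_eq_cube)

lemma r_eq_norm_XY: "r t = sqrt ((X t)\<^sup>2 + (Y t)\<^sup>2)"
  using r_pos[of t] by (simp add: X_def Y_def power_mult_distrib flip: distrib_left)

lemma pr_eq_XYVW: "pr t = (V t * X t + W t * Y t) / r t"
proof -
  have "V t * X t + W t * Y t = r t * pr t"
    by (simp add: V_def W_def X_def Y_def algebra_simps)
      (metis distrib_left sin_cos_squared_add3 mult_1_right)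
  then show ?thesis using r_pos[of t] by simp
qed

lemma S1_eq_XYVW: "S1 \<rho> \<xi> (r t) (\<phi> t) (pr t) (p\<phi> t) = V t * W t + \<Omega>\<^sup>2 * X t * Y t"
proof -
  have "\<And>u l w c s e k :: real. u\<^sup>2 + l\<^sup>2 + k * w\<^sup>2 = 2 * e \<Longrightarrow>
      (c\<^sup>2 - s\<^sup>2) * u * l + (2 * s * c) * (e - l\<^sup>2) = (u * c - l * s) * (u * s + l * c) + k * (w * c) * (w * s)"
    by algebra
  from this[OF energy_identity[of t, unfolded power_divide[symmetric]]]
  show ?thesis
    unfolding S1_def energy unfolding angular_momentum V_def W_def X_def Y_def cos_double sin_double
    by (simp add: power_divide)
qed

lemma S2_eq_XYVW:
  "S2 \<rho> \<xi> (r t) (\<phi> t) (pr t) (p\<phi> t) = ((V t)\<^sup>2 - (W t)\<^sup>2 + \<Omega>\<^sup>2 * ((X t)\<^sup>2 - (Y t)\<^sup>2)) / 2"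
proof -
  have "\<And>u l w c s e k :: real. u\<^sup>2 + l\<^sup>2 + k * w\<^sup>2 = 2 * e \<Longrightarrow>
      - (2 * s * c) * u * l + (c\<^sup>2 - s\<^sup>2) * (e - l\<^sup>2)
        = ((u * c - l * s)\<^sup>2 - (u * s + l * c)\<^sup>2 + k * ((w * c)\<^sup>2 - (w * s)\<^sup>2)) / 2"
    by algebra
  from this[OF energy_identity[of t, unfolded power_divide[symmetric]]]
  show ?thesis
    unfolding S2_def energy unfolding angular_momentum V_def W_def X_def Y_def cos_double sin_double
    by (simp add: power_divide)
qed

lemma exists_clock: "\<exists>\<Theta>. (\<forall>t. (\<Theta> has_real_derivative \<Omega> / D t) (at t)) \<and> \<Theta> t0 = 0"
proof -
  have "isCont (\<lambda>t. \<Omega> / D t) t" for t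
    using D_pos[of t] DERIV_isCont[OF r_deriv] by (auto intro!: continuous_intros simp: D_def)
  then obtain F where F: "\<And>t. (F has_vector_derivative \<Omega> / D t) (at t)"
    using einterval_antiderivative[of "-\<infinity>" "\<infinity>" "\<lambda>t. \<Omega> / D t"] by auto
  have "((\<lambda>t. F t - F t0) has_real_derivative \<Omega> / D t) (at t)" for t
    using F[of t] by (auto intro!: derivative_eq_intros simp: has_real_derivative_iff_has_vector_derivative)
  then show ?thesis by (intro exI[of _ "\<lambda>t. F t - F t0"]) simp
qed

end

locale pericentre_orbit = level_set_orbit +
  fixes t0 :: real and \<Theta> :: "real \<Rightarrow> real"
  assumes r_min: "\<And>t. r t0 \<le> r t" and \<phi>_t0: "\<phi> t0 = 0"
    and clock_deriv: "\<And>t. (\<Theta> has_real_derivative \<Omega> / D t) (at t)" and clock_t0: "\<Theta> t0 = 0"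
begin

definition a :: real where "a = r t0"
definition b :: real where "b = L / (a * \<Omega>)"

lemma a_pos: "a > 0"
  using r_pos by (simp add: a_def)

lemma b_pos: "b > 0"
  using a_pos \<Omega>_pos L_pos by (simp add: b_def)

lemma pr_t0: "pr t0 = 0"
proof -
  have "pr t0 / D t0 = 0"
    using DERIV_local_min[OF r_deriv[of t0], of 1] r_min by auto
  then show ?thesis using D_pos[of t0] by simp
qed

lemma X_eq: "X t = a * cos (\<Theta> t)" and V_eq: "V t = - a * \<Omega> * sin (\<Theta> t)"
  using reparametrized_oscillator[OF \<Omega>_pos X_deriv V_deriv clock_deriv clock_t0]
  by (simp_all add: X_def V_def \<phi>_t0 pr_t0 a_def)

lemma Y_eq: "Y t = b * sin (\<Theta> t)" and W_eq: "W t = b * \<Omega> * cos (\<Theta> t)"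
  using reparametrized_oscillator[OF \<Omega>_pos Y_deriv W_deriv clock_deriv clock_t0] \<Omega>_pos
  by (simp_all add: Y_def W_def \<phi>_t0 pr_t0 a_def b_def)

lemma r_square_ellipse: "(r t)\<^sup>2 = a\<^sup>2 * (cos (\<Theta> t))\<^sup>2 + b\<^sup>2 * (sin (\<Theta> t))\<^sup>2"
  using r_eq_norm_XY[of t] by (simp add: X_eq Y_eq power_mult_distrib)

lemma clock_strict_mono: "x < y \<Longrightarrow> \<Theta> x < \<Theta> y"
  using DERIV_pos_imp_increasing clock_deriv D_pos \<Omega>_pos by (meson divide_pos_pos)

text \<open>Integrating \<open>dt = D / \<Omega> d\<Theta>\<close> along the ellipse gives the elapsed time as an explicit
  strictly increasing function of the clock; it inverts \<open>\<Theta>\<close>.\<close>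
definition time_of_clock :: "real \<Rightarrow> real" where
  "time_of_clock \<theta> = ((1 + \<rho> * (a\<^sup>2 + b\<^sup>2) / 2) * \<theta> + \<rho> * (a\<^sup>2 - b\<^sup>2) / 4 * sin (2 * \<theta>)) / \<Omega>"

definition P :: real where "P = time_of_clock (2 * pi)"

lemma time_of_clock_deriv:
  "(time_of_clock has_real_derivative (1 + \<rho> * (a\<^sup>2 * (cos \<theta>)\<^sup>2 + b\<^sup>2 * (sin \<theta>)\<^sup>2)) / \<Omega>) (at \<theta>)"
proof -
  have "(time_of_clock has_real_derivative
      ((1 + \<rho> * (a\<^sup>2 + b\<^sup>2) / 2) + \<rho> * (a\<^sup>2 - b\<^sup>2) / 4 * (2 * cos (2 * \<theta>))) / \<Omega>) (at \<theta>)"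
    unfolding time_of_clock_def[abs_def] using \<Omega>_pos by (auto intro!: derivative_eq_intros)
  moreover have "(1 + \<rho> * (a\<^sup>2 + b\<^sup>2) / 2) + \<rho> * (a\<^sup>2 - b\<^sup>2) / 4 * (2 * cos (2 * \<theta>))
      = 1 + \<rho> * (a\<^sup>2 * (cos \<theta>)\<^sup>2 + b\<^sup>2 * (sin \<theta>)\<^sup>2)"
    unfolding cos_double_cos sin_squared_eq by (simp add: field_simps)
  ultimately show ?thesis by metis
qed

lemma time_of_clock_strict_mono:
  assumes "x < y" shows "time_of_clock x < time_of_clock y"
proof -
  have "(1 + \<rho> * (a\<^sup>2 * (cos \<theta>)\<^sup>2 + b\<^sup>2 * (sin \<theta>)\<^sup>2)) / \<Omega> > 0" for \<theta>
    using \<Omega>_pos \<rho>_pos by (intro divide_pos_pos add_pos_nonneg) auto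
  then show ?thesis using DERIV_pos_imp_increasing[OF assms] time_of_clock_deriv by blast
qed

lemma time_of_clock_at_clock: "time_of_clock (\<Theta> t) = t - t0"
proof -
  have "((\<lambda>t. time_of_clock (\<Theta> t) - t) has_real_derivative 0) (at t)" for t
  proof -
    have "((\<lambda>t. time_of_clock (\<Theta> t)) has_real_derivative
        (1 + \<rho> * (a\<^sup>2 * (cos (\<Theta> t))\<^sup>2 + b\<^sup>2 * (sin (\<Theta> t))\<^sup>2)) / \<Omega> * (\<Omega> / D t)) (at t)"
      by (rule DERIV_chain2[OF time_of_clock_deriv clock_deriv])
    moreover have "(1 + \<rho> * (a\<^sup>2 * (cos (\<Theta> t))\<^sup>2 + b\<^sup>2 * (sin (\<Theta> t))\<^sup>2)) / \<Omega> * (\<Omega> / D t) = 1"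
      using \<Omega>_pos D_pos[of t] by (simp add: D_def r_square_ellipse)
    ultimately show ?thesis by (auto intro!: derivative_eq_intros)
  qed
  then have "time_of_clock (\<Theta> t) - t = time_of_clock (\<Theta> t0) - t0"
    by (meson DERIV_isconst_all)
  then show ?thesis by (simp add: clock_t0 time_of_clock_def)
qed

lemma time_of_clock_shift: "time_of_clock (\<theta> + 2 * pi) = time_of_clock \<theta> + P"
proof -
  have "sin (2 * (x + 2 * pi)) = sin (2 * x)" for x
  proof -
    have "2 * (x + 2 * pi) = (2 * x + 2 * pi) + 2 * pi" by simp
    then show ?thesis by (simp only: sin_periodic)
  qed
  from this[of \<theta>] this[of 0] show ?thesis using \<Omega>_pos by (simp add: P_def time_of_clock_def field_simps)
qed

lemma P_pos: "P > 0"
  using time_of_clock_strict_mono[of 0 "2 * pi"] by (simp add: P_def time_of_clock_def)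

lemma clock_shift: "\<Theta> (t + P) = \<Theta> t + 2 * pi"
proof -
  have "strict_mono time_of_clock" by (simp add: strict_monoI time_of_clock_strict_mono)
  moreover have "time_of_clock (\<Theta> (t + P)) = time_of_clock (\<Theta> t + 2 * pi)"
    by (simp add: time_of_clock_at_clock time_of_clock_shift)
  ultimately show ?thesis by (simp add: strict_mono_eq)
qed

lemma is_period_P: "is_period r \<phi> pr p\<phi> P"
  unfolding is_period_def
proof (intro allI conjI)
  fix t
  have XY: "X (t + P) = X t" "Y (t + P) = Y t" and VW: "V (t + P) = V t" "W (t + P) = W t"
    by (simp_all add: X_eq Y_eq V_eq W_eq clock_shift)
  then show r: "r (t + P) = r t" by (simp add: r_eq_norm_XY)
  then show "pr (t + P) = pr t" using XY VW by (simp add: pr_eq_XYVW)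
  show "p\<phi> (t + P) = p\<phi> t" by (simp add: angular_momentum)
  have "sin (\<phi> (t + P)) = sin (\<phi> t) \<and> cos (\<phi> (t + P)) = cos (\<phi> t)"
    using XY r r_pos[of t] by (simp add: X_def Y_def)
  then show "\<exists>k::int. \<phi> (t + P) = \<phi> t + 2 * pi * of_int k"
    using sin_cos_eq_iff by blast
qed

text \<open>Since \<open>r\<close> is minimal at \<open>t0\<close>, the trajectory can cross the ray \<open>\<phi> \<equiv> 0\<close> only where
  \<open>X = r \<ge> a\<close>, i.e. where the clock is a multiple of \<open>2 * pi\<close>.\<close>
lemma no_return_before_P:
  assumes "t0 < s" and "s < t0 + P"
  shows "cos (\<phi> s) \<noteq> 1"
proof
  assume "cos (\<phi> s) = 1"
  then have "a * cos (\<Theta> s) = r s"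
    using X_eq[of s] by (simp add: X_def)
  then have "a * cos (\<Theta> s) \<ge> a"
    using r_min[of s] a_def by linarith
  then have "cos (\<Theta> s) = 1"
    using a_pos cos_le_one[of "\<Theta> s"] by (simp add: mult_le_cancel_left1)
  then obtain n :: int where n: "\<Theta> s = of_int n * 2 * pi"
    using cos_one_2pi_int by blast
  have "0 < \<Theta> s" and "\<Theta> s < 2 * pi"
    using clock_strict_mono[OF assms(1)] clock_strict_mono[OF assms(2)] clock_shift[of t0]
    by (simp_all add: clock_t0)
  then have "(0::real) < of_int n" and "of_int n < (1::real)"
    using n by (simp_all add: zero_less_mult_iff)
  then show False by simp
qed

lemma minimal_period_eq_P:
  assumes "minimal_period r \<phi> pr p\<phi> T"
  shows "T = P"
proof -
  have T: "T > 0" "is_period r \<phi> pr p\<phi> T"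
    and T_min: "\<And>T'. 0 < T' \<Longrightarrow> T' < T \<Longrightarrow> \<not> is_period r \<phi> pr p\<phi> T'"
    using assms unfolding minimal_period_def by blast+
  have "\<not> P < T" using T_min[OF P_pos] is_period_P by blast
  moreover have "\<not> T < P"
  proof
    assume "T < P"
    have "\<exists>k::int. \<phi> (t0 + T) = \<phi> t0 + 2 * pi * of_int k"
      using T(2) unfolding is_period_def by blast
    then obtain k :: int where "\<phi> (t0 + T) = of_int k * 2 * pi"
      using \<phi>_t0 by auto
    then have "cos (\<phi> (t0 + T)) = 1"
      by (auto simp: cos_one_2pi_int)
    then show False using no_return_before_P \<open>T > 0\<close> \<open>T < P\<close> by simp
  qed
  ultimately show ?thesis by simp
qed

lemma r_shift: "r (t + P) = r t" and pr_shift: "pr (t + P) = pr t"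
  using is_period_P by (simp_all add: is_period_def)

lemma \<phi>_t0_shift: "\<phi> (t0 + P) = 2 * pi"
proof -
  have "\<exists>k::int. \<phi> (t0 + P) = \<phi> t0 + 2 * pi * of_int k"
    using is_period_P unfolding is_period_def by blast
  then obtain k :: int where k: "\<phi> (t0 + P) = of_int k * 2 * pi"
    using \<phi>_t0 by auto
  have "0 < \<phi> (t0 + P)"
    using \<phi>_strict_mono[of t0 "t0 + P"] P_pos \<phi>_t0 by simp
  then have "k \<ge> 1" using k by (simp add: zero_less_mult_iff)
  moreover have "\<not> k \<ge> 2"
  proof
    assume "k \<ge> 2"
    then have "\<phi> (t0 + P) \<ge> 4 * pi" using k by simp
    moreover have "isCont \<phi> t" for t using \<phi>_deriv by (rule DERIV_isCont)
    ultimately obtain s where "t0 \<le> s" "s \<le> t0 + P" "\<phi> s = 2 * pi"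
      using IVT[of \<phi> t0 "2 * pi" "t0 + P"] P_pos \<phi>_t0 pi_gt_zero by auto
    moreover have "\<phi> s \<noteq> \<phi> t0" using \<open>\<phi> s = 2 * pi\<close> \<phi>_t0 by simp
    moreover have "\<phi> s \<noteq> \<phi> (t0 + P)"
      using \<open>\<phi> s = 2 * pi\<close> \<open>\<phi> (t0 + P) \<ge> 4 * pi\<close> pi_gt_zero by linarith
    ultimately have "t0 < s" "s < t0 + P" by (auto simp: order.order_iff_strict)
    with \<open>\<phi> s = 2 * pi\<close> show False using no_return_before_P[of s] by simp
  qed
  ultimately show ?thesis using k by simp
qed

lemma \<phi>_shift: "\<phi> (t + P) = \<phi> t + 2 * pi"
proof -
  have "((\<lambda>t. \<phi> (t + P) - \<phi> t) has_real_derivative 0) (at t)" for t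
  proof -
    have "((\<lambda>t. \<phi> (t + P)) has_real_derivative L / ((r (t + P))\<^sup>2 * D (t + P)) * 1) (at t)"
      by (rule DERIV_chain2[OF \<phi>_deriv]) (auto intro!: derivative_eq_intros)
    then show ?thesis
      using \<phi>_deriv[of t] by (auto intro!: derivative_eq_intros simp: r_shift D_def)
  qed
  then have "\<phi> (t + P) - \<phi> t = \<phi> (t0 + P) - \<phi> t0" by (meson DERIV_isconst_all)
  then show ?thesis by (simp add: \<phi>_t0_shift \<phi>_t0)
qed

lemma a_le_b: "a \<le> b"
proof -
  have "isCont \<Theta> t" for t using clock_deriv by (rule DERIV_isCont)
  then obtain s where "\<Theta> s = pi / 2"
    using IVT[of \<Theta> t0 "pi / 2" "t0 + P"] P_pos clock_t0 clock_shift[of t0] by auto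
  then have "(r s)\<^sup>2 = b\<^sup>2" using r_square_ellipse[of s] by (simp only:) simp
  then have "r s = b" using r_pos[of s] b_pos by (simp add: power2_eq_iff)
  then show ?thesis using r_min[of s] by (simp add: a_def)
qed

lemma action_p\<phi>: "action p\<phi> \<phi> P = L"
proof -
  have "((\<lambda>t. L * \<phi> t) has_real_derivative p\<phi> t * (L / ((r t)\<^sup>2 * D t))) (at t)" for t
    by (auto intro!: derivative_eq_intros \<phi>_deriv simp: angular_momentum)
  then have "action p\<phi> \<phi> P = (L * \<phi> P - L * \<phi> 0) / (2 * pi)"
    using P_pos by (intro action_eq_antiderivative_diff[OF _ \<phi>_deriv]) auto
  then show ?thesis using \<phi>_shift[of 0] by (simp add: algebra_simps)
qed

lemma action_pr: "action pr r P = E / \<Omega> - L"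
proof -
  \<comment> \<open>By the energy identity, \<open>pr\<^sup>2 / D = (r pr / 2)' + E \<Theta>' / \<Omega> - L \<phi>'\<close>.\<close>
  define F where "F t = r t * pr t / 2 + E * \<Theta> t / \<Omega> - L * \<phi> t" for t
  have "(F has_real_derivative pr t * (pr t / D t)) (at t)" for t
  proof -
    have "(F has_real_derivative (pr t / D t * pr t + r t * ((L\<^sup>2 / (r t) ^ 3 - \<Omega>\<^sup>2 * r t) / D t)) / 2
        + E * (\<Omega> / D t) / \<Omega> - L * (L / ((r t)\<^sup>2 * D t))) (at t)"
      unfolding F_def[abs_def] using \<Omega>_pos
      by (auto intro!: derivative_eq_intros r_deriv pr_deriv clock_deriv \<phi>_deriv simp: mult_ac)
    moreover have "(pr t / D t * pr t + r t * ((L\<^sup>2 / (r t) ^ 3 - \<Omega>\<^sup>2 * r t) / D t)) / 2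
        + E * (\<Omega> / D t) / \<Omega> - L * (L / ((r t)\<^sup>2 * D t)) = pr t * (pr t / D t)"
    proof -
      have "2 * E = (pr t)\<^sup>2 + L\<^sup>2 / (r t)\<^sup>2 + \<Omega>\<^sup>2 * (r t)\<^sup>2" using energy_identity[of t] by simp
      then show ?thesis using \<Omega>_pos D_pos[of t] r_pos[of t]
        by (simp add: field_simps power2_eq_square power3_eq_cube)
    qed
    ultimately show ?thesis by metis
  qed
  then have "action pr r P = (F P - F 0) / (2 * pi)"
    using P_pos by (intro action_eq_antiderivative_diff[OF _ r_deriv]) auto
  also have "F P - F 0 = 2 * pi * (E / \<Omega> - L)"
    using r_shift[of 0] pr_shift[of 0] clock_shift[of 0] \<phi>_shift[of 0] \<Omega>_pos
    by (simp add: F_def field_simps)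
  finally show ?thesis by simp
qed

lemma S1_vanishes: "S1 \<rho> \<xi> (r t) (\<phi> t) (pr t) (p\<phi> t) = 0"
  unfolding S1_eq_XYVW X_eq Y_eq V_eq W_eq by (simp add: power2_eq_square algebra_simps)

lemma S2_eq_axes: "S2 \<rho> \<xi> (r t) (\<phi> t) (pr t) (p\<phi> t) = \<Omega>\<^sup>2 * (a\<^sup>2 - b\<^sup>2) / 2"
proof -
  have "\<And>c s :: real. c\<^sup>2 + s\<^sup>2 = 1 \<Longrightarrow>
      (a * \<Omega> * s)\<^sup>2 - (b * \<Omega> * c)\<^sup>2 + \<Omega>\<^sup>2 * ((a * c)\<^sup>2 - (b * s)\<^sup>2) = \<Omega>\<^sup>2 * (a\<^sup>2 - b\<^sup>2)"
    by algebra
  from this[OF sin_cos_squared_add2] show ?thesis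
    unfolding S2_eq_XYVW X_eq Y_eq V_eq W_eq by simp
qed

lemma S2_eq: "S2 \<rho> \<xi> (r t) (\<phi> t) (pr t) (p\<phi> t) = - sqrt ((E / \<Omega>)\<^sup>2 - L\<^sup>2) * \<Omega>"
proof -
  define u v where "u = L\<^sup>2 / a\<^sup>2" and "v = \<Omega>\<^sup>2 * a\<^sup>2"
  have E: "2 * E = u + v" using energy_identity[of t0] by (simp add: u_def v_def pr_t0 a_def)
  have uv: "L\<^sup>2 * \<Omega>\<^sup>2 = u * v" using a_pos by (simp add: u_def v_def)
  have u: "\<Omega>\<^sup>2 * b\<^sup>2 = u" using a_pos \<Omega>_pos
    by (simp add: b_def u_def power_divide power_mult_distrib)
  have "a\<^sup>2 \<le> b\<^sup>2" using a_le_b a_pos by (simp add: power_mono)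
  then have "v \<le> u" unfolding v_def u[symmetric] by (simp add: mult_left_mono)
  have "((E / \<Omega>)\<^sup>2 - L\<^sup>2) * \<Omega>\<^sup>2 = E\<^sup>2 - L\<^sup>2 * \<Omega>\<^sup>2"
    using \<Omega>_pos by (simp add: field_simps)
  also have "\<dots> = ((u - v) / 2)\<^sup>2"
  proof -
    have "(2 * E)\<^sup>2 - 4 * (L\<^sup>2 * \<Omega>\<^sup>2) = (u - v)\<^sup>2"
      unfolding E uv by (simp add: power2_eq_square algebra_simps)
    then show ?thesis by (simp add: power2_eq_square field_simps)
  qed
  finally have sq: "((E / \<Omega>)\<^sup>2 - L\<^sup>2) * \<Omega>\<^sup>2 = ((u - v) / 2)\<^sup>2" .
  have "sqrt ((E / \<Omega>)\<^sup>2 - L\<^sup>2) * \<Omega> = sqrt (((E / \<Omega>)\<^sup>2 - L\<^sup>2) * \<Omega>\<^sup>2)"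
    using \<Omega>_pos by (simp add: real_sqrt_mult)
  also have "\<dots> = (u - v) / 2" unfolding sq using \<open>v \<le> u\<close> by simp
  finally show ?thesis unfolding S2_eq_axes using u by (simp add: v_def algebra_simps)
qed

end

theorem proposition20:
  fixes \<rho> \<xi> E L T :: real and r \<phi> pr p\<phi> :: "real \<Rightarrow> real"
  assumes "\<rho> > 0" and "\<xi> > 0" and "L > 0"
    and "L\<^sup>2 * (- \<rho> + sqrt (\<rho>\<^sup>2 + \<xi> / L\<^sup>2)) < E" and "E < \<xi> / (2 * \<rho>)"
    and "hamilton_solution \<rho> \<xi> r \<phi> pr p\<phi>"
    and "\<forall>t. H0 \<rho> \<xi> (r t) (\<phi> t) (pr t) (p\<phi> t) = E"
    and "\<forall>t. p\<phi> t = L"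
    and "minimal_period r \<phi> pr p\<phi> T"
    and "\<exists>t0. (\<forall>t. r t0 \<le> r t) \<and> \<phi> t0 = 0"
  shows "action p\<phi> \<phi> T = L
    \<and> action pr r T + action p\<phi> \<phi> T = E / sqrt (\<xi> - 2 * \<rho> * E)
    \<and> (let J = action pr r T + action p\<phi> \<phi> T; I\<phi> = action p\<phi> \<phi> T in
         E = J * (sqrt (\<xi> + \<rho>\<^sup>2 * J\<^sup>2) - \<rho> * J)
       \<and> (\<forall>t. S1 \<rho> \<xi> (r t) (\<phi> t) (pr t) (p\<phi> t) = 0)
       \<and> (\<forall>t. S2 \<rho> \<xi> (r t) (\<phi> t) (pr t) (p\<phi> t)
              = - sqrt (J\<^sup>2 - I\<phi>\<^sup>2) * (sqrt (\<xi> + \<rho>\<^sup>2 * J\<^sup>2) - \<rho> * J)))"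
proof -
  obtain t0 where t0: "\<forall>t. r t0 \<le> r t" "\<phi> t0 = 0" using assms(10) by blast
  have "2 * \<rho> * E < \<xi>" using assms(1,5) by (simp add: field_simps)
  then interpret level_set_orbit \<rho> \<xi> E L r \<phi> pr p\<phi>
    using assms(1,3,6-8) by unfold_locales auto
  obtain \<Theta> where "\<forall>t. (\<Theta> has_real_derivative \<Omega> / D t) (at t)" and "\<Theta> t0 = 0"
    using exists_clock by blast
  then interpret pericentre_orbit \<rho> \<xi> E L r \<phi> pr p\<phi> t0 \<Theta>
    using t0 by unfold_locales auto
  have "T = P" using assms(9) by (rule minimal_period_eq_P)
  define J where "J = E / \<Omega>"
  have J: "action pr r T + action p\<phi> \<phi> T = J"
    using action_pr action_p\<phi> by (simp add: \<open>T = P\<close> J_def)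
  have "sqrt (\<xi> + \<rho>\<^sup>2 * J\<^sup>2) - \<rho> * J = \<Omega>"
    using \<Omega>_pos \<rho>_pos E_pos by (intro sqrt_eq_frequency) (auto simp: J_def \<Omega>_square)
  then show ?thesis
    using J action_p\<phi> S1_vanishes S2_eq \<Omega>_pos by (simp add: \<open>T = P\<close> J_def \<Omega>_def Let_def)
qed

end
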